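(* For every $\gamma\in[0,1]$, the Equal Filling Till Threshold (EFTT) algorithm with threshold $\gamma$ (described in the context) is $\left(1 - \frac{e^{\gamma-1}}{\gamma+1}\right)$-USW, i.e., on every instance the fractional matching $X$ it outputs satisfies $\mathrm{usw}(X)\ge \left(1 - \frac{e^{\gamma-1}}{\gamma+1}\right)\mathrm{usw}(X^* )$ for every fractional matching $X^*$ of the instance.
   Context: Online class matching (divisible setting): an instance is a bipartite graph $G=(N,M,E)$ with known agents $N$, items $M$, $E\subseteq M\times N$ ($a$ likes $o$ iff $(o,a)\in E$); agents are partitioned into $k$ known classes $N_1,\dots,N_k$. Items arrive one at a time in adversarial order; upon arrival of $o$ its set of liking agents is revealed and fractions of $o$ must be irrevocably assigned to agents liking it. A fractional matching is $X=(x_{o,a})\in[0,1]^{M\times N}$ supported on $E$ with $\sum_a x_{o,a}\le1$ for each item and $\sum_o x_{o,a}\le 1$ for each agent; $\deg_X(v)$ denotes the sum of $x$ over edges incident to $v$; an agent is saturated if its degree is $1$. $V_i(X)=\sum_{a\in N_i}\sum_o x_{o,a}$ and $\mathrm{usw}(X)=\sum_i V_i(X)$. EFTT with threshold $\gamma$: the matching is increased continuously (water-filling). Upon arrival of item $o$: Phase I: let $Z_\gamma$ be the set of classes containing at least one agent that likes $o$ and has current degree less than $\gamma$. While $Z_\gamma\neq\emptyset$ and $o$ is not fully assigned, continuously assign mass of $o$, splitting it equally among the classes in $Z_\gamma$; within each class $i\in Z_\gamma$, the mass goes to the agent(s) of class $i$ liking $o$ with minimum current degree; a class is removed from $Z_\gamma$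 once it no longer has an agent liking $o$ with degree less than $\gamma$. Phase II: once $Z_\gamma=\emptyset$, continuously assign the remaining mass of $o$ to the unsaturated agent(s) liking $o$ with smallest current degree, regardless of class, until $o$ is fully assigned or all agents liking $o$ are saturated. *)

theory Defs
  imports Complex_Main
begin

text \<open>Instance: agents of type 'a (set N), items of type 'o (set M), edges E \<subseteq> M \<times> N,
  (it,a) \<in> E iff agent a likes item it. Classes: a labelling cls :: 'a \<Rightarrow> 'c; the class
  N_i is {a \<in> N. cls a = i}.\<close>

definition frac_matching ::
  "('o \<times> 'a) set \<Rightarrow> 'o set \<Rightarrow> 'a set \<Rightarrow> ('o \<Rightarrow> 'a \<Rightarrow> real) \<Rightarrow> bool" where
  "frac_matching E M N X \<longleftrightarrow>
     (\<forall>it a. 0 \<le> X it a \<and> X it a \<le> 1) \<and>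
     (\<forall>it a. (it, a) \<notin> E \<longrightarrow> X it a = 0) \<and>
     (\<forall>it\<in>M. (\<Sum>a\<in>N. X it a) \<le> 1) \<and>
     (\<forall>a\<in>N. (\<Sum>it\<in>M. X it a) \<le> 1)"

definition usw :: "'o set \<Rightarrow> 'a set \<Rightarrow> ('o \<Rightarrow> 'a \<Rightarrow> real) \<Rightarrow> real" where
  "usw M N X = (\<Sum>it\<in>M. \<Sum>a\<in>N. X it a)"

definition likers :: "('o \<times> 'a) set \<Rightarrow> 'a set \<Rightarrow> 'o \<Rightarrow> 'a set" where
  "likers E N it = {a \<in> N. (it, a) \<in> E}"

text \<open>One arrival of EFTT with threshold g. d = current agent degrees, it = arriving item,
  y = the amounts of it given to each agent. The continuous water-filling is described by
  its outcome:
  Phase I: need i is the mass needed to lift every liker of class i to degree g; classes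
  in Z_g (need i > 0) receive equal rates until they leave, so class i gets
  p i = min c (need i) for a common level c, with total min 1 (sum of needs);
  within class i the mass p i water-fills the likers up to a level l i \<le> g.
  Phase II: the remaining mass 1 - (total of phase I) water-fills all likers (any class)
  up to a common level lv \<le> 1, until it is exhausted or all likers are saturated.\<close>

definition eftt_step ::
  "('o \<times> 'a) set \<Rightarrow> 'a set \<Rightarrow> ('a \<Rightarrow> 'c) \<Rightarrow> real \<Rightarrow> ('a \<Rightarrow> real) \<Rightarrow> 'o \<Rightarrow> ('a \<Rightarrow> real) \<Rightarrow> bool"
  where
  "eftt_step E N cls g d it y \<longleftrightarrow>
    (let L = likers E N it;
         C = cls ` L;
         need = (\<lambda>i. \<Sum>a\<in>{a\<in>L. cls a = i}. max 0 (g - d a))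
     in (\<exists>c l lv.
          0 \<le> c \<and>
          (\<Sum>i\<in>C. min c (need i)) = min 1 (\<Sum>i\<in>C. need i) \<and>
          (\<forall>i\<in>C. l i \<le> g \<and>
              (\<Sum>a\<in>{a\<in>L. cls a = i}. max 0 (l i - d a)) = min c (need i)) \<and>
          (let d1 = (\<lambda>a. max (d a) (l (cls a)));
               r = 1 - (\<Sum>i\<in>C. min c (need i))
           in lv \<le> 1 \<and>
              (\<Sum>a\<in>L. max 0 (lv - d1 a)) = min r (\<Sum>a\<in>L. max 0 (1 - d1 a)) \<and>
              (\<forall>a. y a = (if a \<in> L then max (d1 a) lv - d a else 0)))))"

definition eftt_output ::
  "('o \<times> 'a) set \<Rightarrow> 'a set \<Rightarrow> ('a \<Rightarrow> 'c) \<Rightarrow> real \<Rightarrow> 'o list \<Rightarrow> ('o \<Rightarrow> 'a \<Rightarrow> real) \<Rightarrow> bool"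
  where
  "eftt_output E N cls g ord X \<longleftrightarrow>
     (\<forall>it a. it \<notin> set ord \<longrightarrow> X it a = 0) \<and>
     (\<forall>j < length ord.
        eftt_step E N cls g (\<lambda>a. \<Sum>i<j. X (ord ! i) a) (ord ! j) (X (ord ! j)))"

end

theory Submission
  imports Defs
begin

text \<open>Only the shape of a single EFTT step matters (\<open>threshold_filling\<close>): an item that leaves
  one of its likers below saturation is fully assigned, and every agent receiving a share of it
  ends at degree at most \<open>max g Y\<close>, where \<open>Y\<close> is that liker's new degree.

  The analysis is primal-dual. Raising a degree at level \<open>w\<close> costs the price \<open>f w\<close>, equal to
  \<open>theta = exp (g - 1) / (g + 1)\<close> for \<open>w \<le> g\<close> and to \<open>exp (w - 1)\<close> above \<open>g\<close>. The dual of an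
  agent is \<open>F\<close> of its final degree, \<open>F\<close> the antiderivative of \<open>f\<close>; the dual of an item is its
  assigned mass minus the increase of \<open>F\<close> it causes. The duals add up to the welfare of the
  algorithm and are nonnegative because \<open>f \<le> 1\<close>. Every edge is covered to \<open>1 - theta\<close>: either
  the agent ends saturated and \<open>F 1 = 1 - theta\<close>, or the item was fully assigned at prices at
  most \<open>f (max g Y)\<close>, and \<open>F Y + 1 - f (max g Y) \<ge> 1 - theta\<close>. Weak duality concludes.\<close>

text \<open>The constant solves \<open>base_price g * (g + 1) = exp (g - 1)\<close>, which makes the total
  potential of a saturated agent, \<open>fill_potential g 1\<close>, equal to \<open>1 - base_price g\<close>.\<close>

definition base_price :: "real \<Rightarrow> real" where
  "base_price g = exp (g - 1) / (g + 1)"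

definition fill_price :: "real \<Rightarrow> real \<Rightarrow> real" where
  "fill_price g w = (if w \<le> g then base_price g else exp (w - 1))"

text \<open>The antiderivative of \<open>fill_price g\<close> vanishing at 0.\<close>

definition fill_potential :: "real \<Rightarrow> real \<Rightarrow> real" where
  "fill_potential g x = base_price g * min x g + exp (max x g - 1) - exp (g - 1)"

lemma base_price_pos: "0 \<le> g \<Longrightarrow> 0 < base_price g"
  unfolding base_price_def by simp

lemma base_price_mult: "0 \<le> g \<Longrightarrow> base_price g * (g + 1) = exp (g - 1)"
  unfolding base_price_def by simp

lemma base_price_le_exp:
  assumes "0 \<le> g" and "g \<le> w"
  shows "base_price g \<le> exp (w - 1)"
proof -
  have "base_price g \<le> exp (g - 1)"
    using assms(1) unfolding base_price_def by (simp add: divide_le_eq)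
  also have "\<dots> \<le> exp (w - 1)" using assms(2) by simp
  finally show ?thesis .
qed

lemma exp_diff_le: "(u::real) \<le> v \<Longrightarrow> exp v - exp u \<le> exp v * (v - u)"
proof -
  have "exp v * (1 + (u - v)) \<le> exp v * exp (u - v)"
    using exp_ge_add_one_self[of "u - v"] by (simp add: mult_left_mono)
  then show ?thesis by (simp add: algebra_simps flip: exp_add)
qed

lemma fill_price_mono: "0 \<le> g \<Longrightarrow> u \<le> v \<Longrightarrow> fill_price g u \<le> fill_price g v"
  using base_price_le_exp[of g v] unfolding fill_price_def by auto

lemma fill_price_le_one: "0 \<le> g \<Longrightarrow> g \<le> 1 \<Longrightarrow> w \<le> 1 \<Longrightarrow> fill_price g w \<le> 1"
  using base_price_le_exp[of g 1] unfolding fill_price_def by simp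

lemma fill_potential_zero: "0 \<le> g \<Longrightarrow> fill_potential g 0 = 0"
  unfolding fill_potential_def by simp

lemma fill_potential_mono: "0 \<le> g \<Longrightarrow> x \<le> y \<Longrightarrow> fill_potential g x \<le> fill_potential g y"
  unfolding fill_potential_def
  by (intro diff_right_mono add_mono mult_left_mono) (auto simp: less_imp_le[OF base_price_pos])

lemma fill_potential_nonneg: "0 \<le> g \<Longrightarrow> 0 \<le> x \<Longrightarrow> 0 \<le> fill_potential g x"
  using fill_potential_mono[of g 0 x] by (simp add: fill_potential_zero)

lemma fill_potential_one: "0 \<le> g \<Longrightarrow> g \<le> 1 \<Longrightarrow> fill_potential g 1 = 1 - base_price g"
  using base_price_mult[of g] unfolding fill_potential_def
  by (simp add: algebra_simps max_absorb1 min_absorb2)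

lemma fill_potential_diff_le:
  assumes "0 \<le> g" and "u \<le> v"
  shows "fill_potential g v - fill_potential g u \<le> fill_price g v * (v - u)"
proof (cases "v \<le> g")
  case True
  then show ?thesis using assms unfolding fill_potential_def fill_price_def by (simp add: algebra_simps)
next
  case False
  have price_v: "base_price g \<le> fill_price g v" "fill_price g v = exp (v - 1)"
    using base_price_le_exp[OF assms(1), of v] False unfolding fill_price_def by auto
  show ?thesis
  proof (cases "u \<le> g")
    case True
    have "fill_potential g v - fill_potential g u = base_price g * (g - u) + (exp (v - 1) - exp (g - 1))"
      using True False unfolding fill_potential_def by (simp add: algebra_simps)
    also have "\<dots> \<le> fill_price g v * (g - u) + fill_price g v * (v - g)"
      using exp_diff_le[of "g - 1" "v - 1"] price_v True False by (intro add_mono mult_right_mono) auto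
    finally show ?thesis by (simp add: algebra_simps)
  next
    case False
    then show ?thesis using exp_diff_le[of "u - 1" "v - 1"] assms price_v \<open>\<not> v \<le> g\<close>
      unfolding fill_potential_def by simp
  qed
qed

lemma fill_price_max_le_potential:
  assumes "0 \<le> g" and "0 \<le> y"
  shows "fill_price g (max g y) \<le> fill_potential g y + base_price g"
proof (cases "y \<le> g")
  case True
  then show ?thesis using fill_potential_nonneg[OF assms] unfolding fill_price_def by simp
next
  case False
  then show ?thesis using base_price_mult[OF assms(1)] unfolding fill_price_def fill_potential_def
    by (simp add: algebra_simps)
qed

definition threshold_filling :: "'a set \<Rightarrow> real \<Rightarrow> ('a \<Rightarrow> real) \<Rightarrow> ('a \<Rightarrow> real) \<Rightarrow> bool" where
  "threshold_filling L g d y \<longleftrightarrow>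
     (\<forall>a. 0 \<le> y a) \<and> (\<forall>a. a \<notin> L \<longrightarrow> y a = 0) \<and> (\<forall>a\<in>L. d a + y a \<le> 1) \<and>
     (\<forall>a\<in>L. d a + y a < 1 \<longrightarrow>
        sum y L = 1 \<and> (\<forall>b\<in>L. 0 < y b \<longrightarrow> d b + y b \<le> max g (d a + y a)))"

definition item_dual :: "real \<Rightarrow> 'a set \<Rightarrow> ('a \<Rightarrow> real) \<Rightarrow> ('a \<Rightarrow> real) \<Rightarrow> real" where
  "item_dual g N d y = (\<Sum>a\<in>N. y a - (fill_potential g (d a + y a) - fill_potential g (d a)))"

context
  fixes L N :: "'a set" and g :: real and d y :: "'a \<Rightarrow> real"
  assumes filling: "threshold_filling L g d y"
    and L_N: "L \<subseteq> N" and fin: "finite N" and g: "0 \<le> g" "g \<le> 1"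
begin

lemma item_dual_eq_sum_likers:
  "item_dual g N d y = (\<Sum>a\<in>L. y a - (fill_potential g (d a + y a) - fill_potential g (d a)))"
  unfolding item_dual_def using filling L_N fin
  by (intro sum.mono_neutral_right) (auto simp: threshold_filling_def)

lemma item_dual_term_ge:
  assumes "d a + y a \<le> w"
  shows "y a * (1 - fill_price g w)
    \<le> y a - (fill_potential g (d a + y a) - fill_potential g (d a))"
proof -
  have "0 \<le> y a" using filling unfolding threshold_filling_def by simp
  then have "fill_potential g (d a + y a) - fill_potential g (d a) \<le> fill_price g w * y a"
    using fill_potential_diff_le[OF g(1), of "d a" "d a + y a"]
      fill_price_mono[OF g(1) assms] mult_right_mono by fastforce
  then show ?thesis by (simp add: algebra_simps)
qed

lemma item_dual_nonneg: "0 \<le> item_dual g N d y"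
  unfolding item_dual_eq_sum_likers
proof (rule sum_nonneg)
  fix a assume "a \<in> L"
  then have "0 \<le> y a" and "d a + y a \<le> 1"
    using filling unfolding threshold_filling_def by auto
  then have "0 \<le> y a * (1 - fill_price g 1)"
    using fill_price_le_one[OF g, of 1] by simp
  then show "0 \<le> y a - (fill_potential g (d a + y a) - fill_potential g (d a))"
    using item_dual_term_ge[OF \<open>d a + y a \<le> 1\<close>] by linarith
qed

lemma item_dual_covers_edge:
  assumes "a \<in> L" and "0 \<le> d a"
  shows "1 - base_price g \<le> fill_potential g (d a + y a) + item_dual g N d y"
proof (cases "d a + y a < 1")
  case False
  then have "1 - base_price g \<le> fill_potential g (d a + y a)"
    using fill_potential_one[OF g] fill_potential_mono[OF g(1)] by (metis not_less)
  then show ?thesis using item_dual_nonneg by simp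
next
  case True
  define w where "w = max g (d a + y a)"
  have full: "sum y L = 1" and below: "\<forall>b\<in>L. 0 < y b \<longrightarrow> d b + y b \<le> w"
    using filling assms True unfolding threshold_filling_def w_def by auto
  have "1 - fill_price g w = (\<Sum>b\<in>L. y b * (1 - fill_price g w))"
    using full by (simp flip: sum_distrib_right)
  also have "\<dots> \<le> item_dual g N d y"
    unfolding item_dual_eq_sum_likers
  proof (rule sum_mono)
    fix b assume "b \<in> L"
    show "y b * (1 - fill_price g w)
      \<le> y b - (fill_potential g (d b + y b) - fill_potential g (d b))"
    proof (cases "0 < y b")
      case True
      then show ?thesis using item_dual_term_ge \<open>b \<in> L\<close> below by simp
    next
      case False
      then have "y b = 0" using filling unfolding threshold_filling_def by (meson antisym not_le)
      then show ?thesis by simp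
    qed
  qed
  finally show ?thesis
    using fill_price_max_le_potential[OF g(1), of "d a + y a"] filling assms
    unfolding w_def threshold_filling_def by fastforce
qed

end

lemma frac_matching_weak_duality:
  assumes Xs: "frac_matching E M N Xs"
    and nonneg: "\<forall>a\<in>N. 0 \<le> \<alpha> a" "\<forall>it\<in>M. 0 \<le> \<beta> it"
    and covers: "\<forall>it\<in>M. \<forall>a\<in>N. (it, a) \<in> E \<longrightarrow> \<rho> \<le> \<alpha> a + \<beta> it"
  shows "\<rho> * usw M N Xs \<le> sum \<alpha> N + sum \<beta> M"
proof -
  have "\<rho> * usw M N Xs \<le> (\<Sum>it\<in>M. \<Sum>a\<in>N. Xs it a * (\<alpha> a + \<beta> it))"
    unfolding usw_def sum_distrib_left
  proof (intro sum_mono)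
    fix it a assume "it \<in> M" "a \<in> N"
    then show "\<rho> * Xs it a \<le> Xs it a * (\<alpha> a + \<beta> it)"
      using Xs covers unfolding frac_matching_def
      by (cases "(it, a) \<in> E") (auto simp: mult.commute[of \<rho>] intro: mult_left_mono)
  qed
  also have "\<dots> = (\<Sum>a\<in>N. \<alpha> a * (\<Sum>it\<in>M. Xs it a)) + (\<Sum>it\<in>M. \<beta> it * (\<Sum>a\<in>N. Xs it a))"
    by (simp add: algebra_simps sum.distrib sum_distrib_left sum.swap[of _ M N])
  also have "\<dots> \<le> sum \<alpha> N + sum \<beta> M"
    using Xs nonneg unfolding frac_matching_def
    by (intro add_mono sum_mono) (auto simp: mult_left_le)
  finally show ?thesis .
qed

theorem threshold_filling_competitive:
  fixes X Xs :: "nat \<Rightarrow> 'a \<Rightarrow> real" and E :: "(nat \<times> 'a) set"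
  assumes fin: "finite N" and g: "0 \<le> g" "g \<le> 1"
    and steps: "\<forall>j<n. threshold_filling (likers E N j) g (\<lambda>a. \<Sum>i<j. X i a) (X j)"
    and Xs: "frac_matching E {..<n} N Xs"
  shows "(1 - base_price g) * usw {..<n} N Xs \<le> usw {..<n} N X"
proof -
  define D where "D j = (\<lambda>a. \<Sum>i<j. X i a)" for j
  have step: "threshold_filling (likers E N j) g (D j) (X j)" if "j < n" for j
    using steps that unfolding D_def by simp
  have L_N: "likers E N j \<subseteq> N" for j unfolding likers_def by auto
  have X_nonneg: "0 \<le> X j a" if "j < n" for j a
    using step that unfolding threshold_filling_def by auto
  have D_mono: "D i a \<le> D j a" if "i \<le> j" "j \<le> n" for i j a
    unfolding D_def using that X_nonneg by (intro sum_mono2) auto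
  have D_nonneg: "0 \<le> D j a" if "j \<le> n" for j a
    using D_mono[of 0 j a] that by (simp add: D_def)
  define \<alpha> where "\<alpha> a = fill_potential g (D n a)" for a
  define \<beta> where "\<beta> j = item_dual g N (D j) (X j)" for j
  have "sum \<beta> {..<n} = usw {..<n} N X
      - (\<Sum>a\<in>N. \<Sum>j<n. fill_potential g (D (Suc j) a) - fill_potential g (D j a))"
    unfolding \<beta>_def item_dual_def usw_def D_def
    by (simp add: sum_subtractf sum.swap[of _ "{..<n}" N])
  also have "\<dots> = usw {..<n} N X - sum \<alpha> N"
    using sum_lessThan_telescope[of "\<lambda>j. fill_potential g (D j _)" n]
    by (simp add: \<alpha>_def D_def fill_potential_zero[OF g(1)])
  finally have "sum \<alpha> N + sum \<beta> {..<n} = usw {..<n} N X" by simp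
  moreover have "(1 - base_price g) * usw {..<n} N Xs \<le> sum \<alpha> N + sum \<beta> {..<n}"
  proof (rule frac_matching_weak_duality[OF Xs])
    show "\<forall>a\<in>N. 0 \<le> \<alpha> a"
      unfolding \<alpha>_def using D_nonneg fill_potential_nonneg[OF g(1)] by simp
    show "\<forall>j\<in>{..<n}. 0 \<le> \<beta> j"
      unfolding \<beta>_def using item_dual_nonneg[OF step L_N fin g] by simp
    show "\<forall>j\<in>{..<n}. \<forall>a\<in>N. (j, a) \<in> E \<longrightarrow> 1 - base_price g \<le> \<alpha> a + \<beta> j"
    proof (intro ballI impI)
      fix j a assume "j \<in> {..<n}" "a \<in> N" "(j, a) \<in> E"
      then have "a \<in> likers E N j" and "j < n" by (auto simp: likers_def)
      then have "1 - base_price g \<le> fill_potential g (D j a + X j a) + \<beta> j"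
        unfolding \<beta>_def using item_dual_covers_edge[OF step L_N fin g] D_nonneg[of j a] by simp
      moreover have "fill_potential g (D j a + X j a) \<le> \<alpha> a"
        using D_mono[of "Suc j" n a] \<open>j < n\<close> fill_potential_mono[OF g(1)]
        unfolding \<alpha>_def by (simp add: D_def)
      ultimately show "1 - base_price g \<le> \<alpha> a + \<beta> j" by simp
    qed
  qed
  ultimately show ?thesis by simp
qed

lemma water_level_saturates:
  fixes e :: "'a \<Rightarrow> real"
  assumes "finite L" and "lv \<le> 1"
    and level: "(\<Sum>a\<in>L. max 0 (lv - e a)) = min r (\<Sum>a\<in>L. max 0 (1 - e a))"
    and "a \<in> L" and "max (e a) lv < 1"
  shows "(\<Sum>a\<in>L. max 0 (lv - e a)) = r"
proof (rule ccontr)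
  assume "(\<Sum>a\<in>L. max 0 (lv - e a)) \<noteq> r"
  then have "(\<Sum>a\<in>L. max 0 (lv - e a)) = (\<Sum>a\<in>L. max 0 (1 - e a))"
    using level by (simp add: min_def split: if_splits)
  moreover have "(\<Sum>a\<in>L. max 0 (lv - e a)) < (\<Sum>a\<in>L. max 0 (1 - e a))"
    using assms by (intro sum_strict_mono_ex1) (auto intro!: bexI[of _ a])
  ultimately show False by simp
qed

lemma eftt_step_threshold_filling:
  assumes step: "eftt_step E N cls g d it y"
    and "finite N" and "g \<le> 1" and d_le: "\<forall>a\<in>likers E N it. d a \<le> 1"
  shows "threshold_filling (likers E N it) g d y"
proof -
  define L where "L = likers E N it"
  define need where "need i = (\<Sum>a\<in>{a\<in>L. cls a = i}. max 0 (g - d a))" for i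
  from step obtain c l lv where
    phase1: "\<forall>i\<in>cls ` L. l i \<le> g \<and>
      (\<Sum>a\<in>{a\<in>L. cls a = i}. max 0 (l i - d a)) = min c (need i)"
    and "lv \<le> 1"
    and phase2: "(\<Sum>a\<in>L. max 0 (lv - max (d a) (l (cls a)))) =
      min (1 - (\<Sum>i\<in>cls ` L. min c (need i))) (\<Sum>a\<in>L. max 0 (1 - max (d a) (l (cls a))))"
    and y: "\<forall>a. y a = (if a \<in> L then max (max (d a) (l (cls a))) lv - d a else 0)"
    unfolding eftt_step_def Let_def L_def need_def by blast
  define d1 where "d1 a = max (d a) (l (cls a))" for a
  have "finite L" using \<open>finite N\<close> unfolding L_def likers_def by simp
  have l_le: "l (cls a) \<le> g" if "a \<in> L" for a using phase1 that by auto
  have phase1_total: "(\<Sum>a\<in>L. max 0 (l (cls a) - d a)) = (\<Sum>i\<in>cls ` L. min c (need i))"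
  proof -
    have "(\<Sum>a\<in>L. max 0 (l (cls a) - d a))
        = (\<Sum>i\<in>cls ` L. \<Sum>a\<in>{a\<in>L. cls a = i}. max 0 (l i - d a))"
      using sum.group[OF \<open>finite L\<close>, of "cls ` L" cls "\<lambda>a. max 0 (l (cls a) - d a)"] \<open>finite L\<close>
      by (auto intro!: sum.cong)
    then show ?thesis using phase1 by simp
  qed
  have y_L: "y a = max 0 (l (cls a) - d a) + max 0 (lv - d1 a)" if "a \<in> L" for a
    using y that unfolding d1_def by (auto simp: max_def split: if_splits)
  have deg: "d a + y a = max (d1 a) lv" if "a \<in> L" for a
    using y that unfolding d1_def by simp
  have "\<forall>a\<in>L. d a + y a < 1 \<longrightarrow>
      sum y L = 1 \<and> (\<forall>b\<in>L. 0 < y b \<longrightarrow> d b + y b \<le> max g (d a + y a))"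
  proof (intro ballI impI conjI)
    fix a assume "a \<in> L" and "d a + y a < 1"
    then have "(\<Sum>b\<in>L. max 0 (lv - d1 b)) = 1 - (\<Sum>i\<in>cls ` L. min c (need i))"
      using water_level_saturates[OF \<open>finite L\<close> \<open>lv \<le> 1\<close>] phase2 deg unfolding d1_def by metis
    then show "sum y L = 1"
      using phase1_total y_L by (simp add: sum.distrib)
    show "d b + y b \<le> max g (d a + y a)" if "b \<in> L" and "0 < y b" for b
    proof (cases "d1 b \<le> lv")
      case True
      then show ?thesis using deg \<open>a \<in> L\<close> \<open>b \<in> L\<close> by auto
    next
      case False
      then have "d b + y b = l (cls b)"
        using deg[OF \<open>b \<in> L\<close>] \<open>0 < y b\<close> unfolding d1_def by (auto simp: max_def split: if_splits)
      then show ?thesis using l_le[OF \<open>b \<in> L\<close>] by simp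
    qed
  qed
  moreover have "\<forall>a\<in>L. d a + y a \<le> 1"
    using deg d_le l_le \<open>lv \<le> 1\<close> \<open>g \<le> 1\<close> unfolding d1_def L_def by fastforce
  ultimately show ?thesis
    using y unfolding threshold_filling_def L_def by auto
qed

lemma eftt_output_threshold_filling:
  assumes "finite N" and "g \<le> 1" and eftt: "eftt_output E N cls g ord X"
  shows "\<forall>j<length ord. threshold_filling (likers E N (ord ! j)) g
    (\<lambda>a. \<Sum>i<j. X (ord ! i) a) (X (ord ! j))"
proof -
  define D where "D j = (\<lambda>a. \<Sum>i<j. X (ord ! i) a)" for j
  have filling: "threshold_filling (likers E N (ord ! j)) g (D j) (X (ord ! j))"
    if "j < length ord" and "\<forall>a. D j a \<le> 1" for j
  proof (rule eftt_step_threshold_filling[OF _ \<open>finite N\<close> \<open>g \<le> 1\<close>])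
    show "eftt_step E N cls g (D j) (ord ! j) (X (ord ! j))"
      using eftt \<open>j < length ord\<close> unfolding eftt_output_def D_def by simp
  qed (simp add: that(2))
  have "\<forall>a. D j a \<le> 1" if "j \<le> length ord" for j
    using that
  proof (induction j)
    case 0
    then show ?case by (simp add: D_def)
  next
    case (Suc j)
    then have "threshold_filling (likers E N (ord ! j)) g (D j) (X (ord ! j))"
      using filling by simp
    then show ?case
      using Suc unfolding threshold_filling_def by (auto simp: D_def)
  qed
  then show ?thesis using filling unfolding D_def by simp
qed

lemma usw_reindex: "bij_betw h I M \<Longrightarrow> usw M N X = usw I N (\<lambda>i. X (h i))"
  unfolding usw_def by (rule sum.reindex_bij_betw[symmetric])

lemma frac_matching_reindex:
  assumes "bij_betw h I M" and "frac_matching E M N X"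
  shows "frac_matching {(i, a). (h i, a) \<in> E} I N (\<lambda>i. X (h i))"
proof -
  have "(\<Sum>i\<in>I. X (h i) a) = (\<Sum>it\<in>M. X it a)" for a
    using sum.reindex_bij_betw[OF assms(1)] .
  then show ?thesis
    using assms(2) bij_betwE[OF assms(1)] unfolding frac_matching_def by simp
qed

theorem lemma1:
  fixes E :: "('o \<times> 'a) set" and M :: "'o set" and N :: "'a set"
    and cls :: "'a \<Rightarrow> 'c" and g :: real and ord :: "'o list"
    and X Xs :: "'o \<Rightarrow> 'a \<Rightarrow> real"
  assumes "finite M" and "finite N" and "E \<subseteq> M \<times> N"
    and "0 \<le> g" and "g \<le> 1"
    and "distinct ord" and "set ord = M"
    and "eftt_output E N cls g ord X"
    and "frac_matching E M N Xs"
  shows "usw M N X \<ge> (1 - exp (g - 1) / (g + 1)) * usw M N Xs"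
proof -
  define n where "n = length ord"
  have bij: "bij_betw (nth ord) {..<n} M"
    using bij_betw_nth[OF \<open>distinct ord\<close>] \<open>set ord = M\<close> unfolding n_def by simp
  have "\<forall>j<n. threshold_filling (likers {(j, a). (ord ! j, a) \<in> E} N j) g
      (\<lambda>a. \<Sum>i<j. X (ord ! i) a) (X (ord ! j))"
    using eftt_output_threshold_filling[OF \<open>finite N\<close> \<open>g \<le> 1\<close> \<open>eftt_output E N cls g ord X\<close>]
    unfolding n_def likers_def by simp
  then have "(1 - base_price g) * usw {..<n} N (\<lambda>j. Xs (ord ! j))
      \<le> usw {..<n} N (\<lambda>j. X (ord ! j))"
    using frac_matching_reindex[OF bij \<open>frac_matching E M N Xs\<close>]
    by (rule threshold_filling_competitive[OF \<open>finite N\<close> \<open>0 \<le> g\<close> \<open>g \<le> 1\<close>])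
  then show ?thesis
    by (simp add: usw_reindex[OF bij, of N X] usw_reindex[OF bij, of N Xs] base_price_def)
qed

end
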